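(* Let $\mathcal{S},\mathcal{A}$ be finite, $\gamma\in(0,1)$, $\alpha\in(0,1)$, $\zeta>0$, and consider an MDP with $(\tilde r(s,a),\tilde s')\sim P(\cdot,\cdot\mid s,a)$ and bounded rewards. For $V:\mathcal{S}\to\mathbb{R}$ define the operator $$(\mathcal{T}^*V)(s)=V(s)+\max_a 2\zeta\,\mathbb{E}_{r,s'}\big[(1-\alpha)\big(\delta(s,a,r,s')\big)_-+\alpha\big(\delta(s,a,r,s')\big)_+\big],\qquad \delta(s,a,r,s')=r+\gamma V(s')-V(s),$$ where $(r,s')\sim P(\cdot,\cdot\mid s,a)$. Then the optimal dynamic-expectile value function $V^*$ is the unique solution of $\mathcal{T}^*V=V$.
   Context: $(x)_-=\min(x,0)$, $(x)_+=\max(x,0)$. $\rho=\mathrm{Expectile}_\alpha$, where $\mathrm{Expectile}_\alpha[\tilde x]=\arg\min_y(1-\alpha)\mathbb{E}[(\tilde x-y)_-^2]+\alpha\mathbb{E}[(\tilde x-y)_+^2]$. The optimal action-value function $Q^*$ solves $Q^*(s,a)=\rho\big(\tilde r(s,a)+\gamma\max_{a'}Q^*(\tilde s',a')\big)$ ($\rho$ taken over the joint law of $(\tilde r(s,a),\tilde s')$), and $V^*(s)=\max_aQ^*(s,a)$, so that $V^*(s)=\max_a\rho(\tilde r(s,a)+\gamma V^*(\tilde s'))$. *)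

theory Defs
  imports "HOL-Probability.Probability"
begin

definition neg_part :: "real \<Rightarrow> real" where
  "neg_part x = min x 0"

definition pos_part :: "real \<Rightarrow> real" where
  "pos_part x = max x 0"

definition expectile_loss :: "real \<Rightarrow> 'b measure \<Rightarrow> ('b \<Rightarrow> real) \<Rightarrow> real \<Rightarrow> real" where
  "expectile_loss \<alpha> M X y =
     (1 - \<alpha>) * (\<integral>\<omega>. (neg_part (X \<omega> - y))\<^sup>2 \<partial>M) + \<alpha> * (\<integral>\<omega>. (pos_part (X \<omega> - y))\<^sup>2 \<partial>M)"

text \<open>Expectile_alpha[X] = argmin_y of the expectile loss (the minimiser is unique for
  alpha in (0,1) and bounded X).\<close>

definition expectile :: "real \<Rightarrow> 'b measure \<Rightarrow> ('b \<Rightarrow> real) \<Rightarrow> real" where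
  "expectile \<alpha> M X = (THE y. \<forall>z. expectile_loss \<alpha> M X y \<le> expectile_loss \<alpha> M X z)"

definition Tstar :: "real \<Rightarrow> real \<Rightarrow> real \<Rightarrow> ('s \<Rightarrow> 'a \<Rightarrow> (real \<times> 's) measure)
    \<Rightarrow> ('s \<Rightarrow> real) \<Rightarrow> 's \<Rightarrow> real" where
  "Tstar \<zeta> \<alpha> \<gamma> P V s = V s +
     (MAX a. 2 * \<zeta> * (\<integral>(r, s'). (1 - \<alpha>) * neg_part (r + \<gamma> * V s' - V s)
                                 + \<alpha> * pos_part (r + \<gamma> * V s' - V s) \<partial>(P s a)))"

end

theory Submission
  imports Defs
begin

(*
  Write h(t) = (1 - alpha) t_- + alpha t_+ for half the derivative of the expectile penalty
  (1 - alpha) (t_-)^2 + alpha (t_+)^2. The penalty is strongly convex with modulus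
  m = min alpha (1 - alpha), so the expectile of a bounded X is the unique root e of
  E h(X - e) = 0, which exists by the intermediate value theorem. Since
  T* V = V + 2 zeta max_a E h(delta), the fixed points of T* are the V with
  max_a E h(delta(s, a)) = 0 at every s, and V* = max_a Q(., a) is one of them because every
  Q(s, a) is such a root. For uniqueness, h increases at rate at least m: at a state s where
  V - W attains a positive maximum d, the TD errors of W exceed those of V by at least
  (1 - gamma) d, so E h(delta_W(s, a)) >= E h(delta_V(s, a)) + m (1 - gamma) d for every a,
  which is incompatible with both maxima being 0.
*)

definition expectile_score :: "real \<Rightarrow> real \<Rightarrow> real" where
  "expectile_score \<alpha> t = (1 - \<alpha>) * neg_part t + \<alpha> * pos_part t"

definition expectile_penalty :: "real \<Rightarrow> real \<Rightarrow> real" where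
  "expectile_penalty \<alpha> t = (1 - \<alpha>) * (neg_part t)\<^sup>2 + \<alpha> * (pos_part t)\<^sup>2"

lemma expectile_score_eq: "expectile_score \<alpha> t = (if t \<le> 0 then (1 - \<alpha>) * t else \<alpha> * t)"
  by (simp add: expectile_score_def neg_part_def pos_part_def)

lemma continuous_on_expectile_score: "continuous_on A (expectile_score \<alpha>)"
  unfolding expectile_score_def neg_part_def pos_part_def by (intro continuous_intros)

lemma continuous_on_expectile_penalty: "continuous_on A (expectile_penalty \<alpha>)"
  unfolding expectile_penalty_def neg_part_def pos_part_def by (intro continuous_intros)

lemma expectile_score_mono:
  assumes "0 \<le> \<alpha>" "\<alpha> \<le> 1" "t \<le> u"
  shows "expectile_score \<alpha> t \<le> expectile_score \<alpha> u"
  using assms unfolding expectile_score_eq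
  by (smt (verit, best) mult_left_mono mult_nonneg_nonneg mult_nonneg_nonpos)

lemma expectile_score_add_ge:
  assumes "0 \<le> \<alpha>" "\<alpha> \<le> 1" "0 \<le> c"
  shows "expectile_score \<alpha> t + min \<alpha> (1 - \<alpha>) * c \<le> expectile_score \<alpha> (t + c)"
proof -
  have "min \<alpha> (1 - \<alpha>) * x \<le> \<alpha> * x" "min \<alpha> (1 - \<alpha>) * x \<le> (1 - \<alpha>) * x" if "0 \<le> x" for x
    using that by (simp_all add: mult_right_mono)
  from this[of c] this[of "t + c"] this[of "- t"] assms show ?thesis
    by (cases "t \<le> 0"; cases "t + c \<le> 0") (auto simp: expectile_score_eq algebra_simps)
qed

lemma expectile_score_add_le:
  assumes "0 \<le> \<alpha>" "\<alpha> \<le> 1" "0 \<le> c"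
  shows "expectile_score \<alpha> (t + c) \<le> expectile_score \<alpha> t + c"
proof -
  have "\<alpha> * x \<le> x" "(1 - \<alpha>) * x \<le> x" if "0 \<le> x" for x
    using that assms by (simp_all add: mult_left_le_one_le)
  from this[of c] this[of "t + c"] this[of "- t"] assms show ?thesis
    by (cases "t \<le> 0"; cases "t + c \<le> 0") (auto simp: expectile_score_eq algebra_simps)
qed

lemma expectile_penalty_strongly_convex:
  assumes "0 \<le> \<alpha>" "\<alpha> \<le> 1"
  shows "expectile_penalty \<alpha> t - 2 * d * expectile_score \<alpha> t + min \<alpha> (1 - \<alpha>) * d\<^sup>2
    \<le> expectile_penalty \<alpha> (t - d)"
proof -
  let ?m = "min \<alpha> (1 - \<alpha>)"
  have m: "?m * d\<^sup>2 \<le> \<alpha> * d\<^sup>2" "?m * d\<^sup>2 \<le> (1 - \<alpha>) * d\<^sup>2"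
    by (simp_all add: mult_right_mono)
  have sq: "(t - d)\<^sup>2 \<le> d\<^sup>2" if "0 \<le> t \<and> t \<le> d \<or> d \<le> t \<and> t \<le> 0"
    using that by (auto simp flip: abs_le_square_iff)
  show ?thesis
  proof (cases "0 < t"; cases "0 < t - d")
    assume "0 < t" "\<not> 0 < t - d"
    have "(2 * \<alpha> - 1) * (t - d)\<^sup>2 \<le> (\<alpha> - ?m) * d\<^sup>2"
      using sq assms \<open>0 < t\<close> \<open>\<not> 0 < t - d\<close>
      by (cases "\<alpha> \<le> 1/2") (auto simp: mult_nonpos_nonneg mult_mono)
    then show ?thesis using \<open>0 < t\<close> \<open>\<not> 0 < t - d\<close>
      by (simp add: expectile_penalty_def expectile_score_def neg_part_def pos_part_def power2_eq_square algebra_simps)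
  next
    assume "\<not> 0 < t" "0 < t - d"
    have "(1 - 2 * \<alpha>) * (t - d)\<^sup>2 \<le> (1 - \<alpha> - ?m) * d\<^sup>2"
      using sq assms \<open>\<not> 0 < t\<close> \<open>0 < t - d\<close>
      by (cases "\<alpha> \<le> 1/2") (auto simp: mult_nonpos_nonneg mult_mono)
    then show ?thesis using \<open>\<not> 0 < t\<close> \<open>0 < t - d\<close>
      by (simp add: expectile_penalty_def expectile_score_def neg_part_def pos_part_def power2_eq_square algebra_simps)
  qed (use m in \<open>auto simp: expectile_penalty_def expectile_score_def neg_part_def pos_part_def power2_eq_square algebra_simps\<close>)
qed

lemma (in finite_measure) integrable_continuous_comp_AE_bounded:
  fixes X :: "'a \<Rightarrow> real"
  assumes "X \<in> borel_measurable M" "AE x in M. \<bar>X x\<bar> \<le> B" "continuous_on UNIV g"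
  shows "integrable M (\<lambda>x. g (X x) :: real)"
proof -
  have "compact (g ` {-B..B})"
    using assms(3) by (intro compact_continuous_image) (auto intro: continuous_on_subset)
  then obtain C where C: "\<forall>t\<in>{-B..B}. \<bar>g t\<bar> \<le> C"
    unfolding bounded_real[symmetric] by (metis compact_imp_bounded bounded_real image_eqI)
  show ?thesis
  proof (rule integrable_const_bound)
    show "AE x in M. norm (g (X x)) \<le> C"
      using assms(2) by eventually_elim (use C in \<open>auto simp: abs_le_iff\<close>)
    show "(\<lambda>x. g (X x)) \<in> borel_measurable M"
      using assms(1) borel_measurable_continuous_onI[OF assms(3)] by (rule measurable_compose)
  qed
qed

lemma (in prob_space) integral_add_const_le:
  fixes f g :: "'a \<Rightarrow> real"
  assumes "integrable M f" "integrable M g" "\<And>x. f x + c \<le> g x"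
  shows "(\<integral>x. f x \<partial>M) + c \<le> (\<integral>x. g x \<partial>M)"
proof -
  have "(\<integral>x. f x \<partial>M) + c = (\<integral>x. f x + c \<partial>M)"
    using assms(1) by (simp add: prob_space)
  also have "\<dots> \<le> (\<integral>x. g x \<partial>M)"
    using assms by (intro integral_mono) auto
  finally show ?thesis .
qed

context prob_space
begin

context
  fixes X :: "'a \<Rightarrow> real" and B \<alpha> :: real
  assumes X_measurable: "X \<in> borel_measurable M"
    and X_bounded: "AE x in M. \<bar>X x\<bar> \<le> B"
    and level: "0 \<le> \<alpha>" "\<alpha> \<le> 1"
begin

lemma integrable_expectile_score: "integrable M (\<lambda>x. expectile_score \<alpha> (X x - y))"
  using X_measurable X_bounded
  by (intro integrable_continuous_comp_AE_bounded[where g = "\<lambda>t. expectile_score \<alpha> (t - y)"])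
     (auto intro!: continuous_intros continuous_on_compose2[OF continuous_on_expectile_score])

lemma expectile_loss_eq_integral_penalty:
  "expectile_loss \<alpha> M X y = (\<integral>x. expectile_penalty \<alpha> (X x - y) \<partial>M)"
proof -
  have "integrable M (\<lambda>x. (neg_part (X x - y))\<^sup>2)" "integrable M (\<lambda>x. (pos_part (X x - y))\<^sup>2)"
    unfolding neg_part_def pos_part_def
    by (intro integrable_continuous_comp_AE_bounded[OF X_measurable X_bounded] continuous_intros)+
  then show ?thesis
    by (simp add: expectile_loss_def expectile_penalty_def)
qed

lemma integrable_expectile_penalty: "integrable M (\<lambda>x. expectile_penalty \<alpha> (X x - y))"
  using X_measurable X_bounded
  by (intro integrable_continuous_comp_AE_bounded[where g = "\<lambda>t. expectile_penalty \<alpha> (t - y)"])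
     (auto intro!: continuous_intros continuous_on_compose2[OF continuous_on_expectile_penalty])

lemma exists_integral_expectile_score_eq_0: "\<exists>e. (\<integral>x. expectile_score \<alpha> (X x - e) \<partial>M) = 0"
proof -
  define f where "f y = (\<integral>x. expectile_score \<alpha> (X x - y) \<partial>M)" for y
  have antimono: "f v \<le> f u" if "u \<le> v" for u v
    unfolding f_def using that level
    by (intro integral_mono integrable_expectile_score) (auto intro!: expectile_score_mono)
  have slope: "f u + - (v - u) \<le> f v" if "u \<le> v" for u v
    unfolding f_def
  proof (intro integral_add_const_le integrable_expectile_score)
    show "expectile_score \<alpha> (X x - u) + - (v - u) \<le> expectile_score \<alpha> (X x - v)" for x
      using that level expectile_score_add_le[of \<alpha> "v - u" "X x - v"] by simp
  qed
  have "\<bar>f u - f v\<bar> \<le> \<bar>u - v\<bar>" for u v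
    using antimono[of u v] antimono[of v u] slope[of u v] slope[of v u] by linarith
  then have "1-lipschitz_on UNIV f"
    by (intro lipschitz_onI) (auto simp: dist_real_def)
  then have "continuous_on {-\<bar>B\<bar>..\<bar>B\<bar>} f"
    by (auto intro: lipschitz_on_continuous_on continuous_on_subset)
  moreover have "0 \<le> (\<integral>x. - expectile_score \<alpha> (X x - \<bar>B\<bar>) \<partial>M)"
    using X_bounded level
    by (intro integral_nonneg_AE) (auto elim!: eventually_mono simp: expectile_score_eq mult_nonneg_nonpos)
  moreover have "0 \<le> f (-\<bar>B\<bar>)"
    unfolding f_def using X_bounded level
    by (intro integral_nonneg_AE) (auto elim!: eventually_mono simp: expectile_score_eq)
  ultimately show ?thesis
    using IVT2'[of f "\<bar>B\<bar>" 0 "-\<bar>B\<bar>"] by (auto simp: f_def)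
qed

lemma expectile_loss_quadratic_growth:
  assumes e: "(\<integral>x. expectile_score \<alpha> (X x - e) \<partial>M) = 0"
  shows "expectile_loss \<alpha> M X e + min \<alpha> (1 - \<alpha>) * (z - e)\<^sup>2 \<le> expectile_loss \<alpha> M X z"
proof -
  have "(\<integral>x. expectile_penalty \<alpha> (X x - e) - 2 * (z - e) * expectile_score \<alpha> (X x - e) \<partial>M)
      = (\<integral>x. expectile_penalty \<alpha> (X x - e) \<partial>M)"
    using e by (simp add: integrable_expectile_penalty integrable_expectile_score)
  moreover have "(\<integral>x. expectile_penalty \<alpha> (X x - e) - 2 * (z - e) * expectile_score \<alpha> (X x - e) \<partial>M)
      + min \<alpha> (1 - \<alpha>) * (z - e)\<^sup>2 \<le> (\<integral>x. expectile_penalty \<alpha> (X x - z) \<partial>M)"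
    using expectile_penalty_strongly_convex[OF level, of "X _ - e" "z - e"]
    by (intro integral_add_const_le) (simp_all add: integrable_expectile_penalty integrable_expectile_score)
  ultimately show ?thesis
    by (simp add: expectile_loss_eq_integral_penalty)
qed

lemma expectile_eqI:
  assumes "0 < \<alpha>" "\<alpha> < 1" and e: "(\<integral>x. expectile_score \<alpha> (X x - e) \<partial>M) = 0"
  shows "expectile \<alpha> M X = e"
  unfolding expectile_def
proof (rule the_equality)
  have m: "0 < min \<alpha> (1 - \<alpha>)"
    using assms by simp
  note growth = expectile_loss_quadratic_growth[OF e]
  show "\<forall>z. expectile_loss \<alpha> M X e \<le> expectile_loss \<alpha> M X z"
  proof
    fix z
    have "0 \<le> min \<alpha> (1 - \<alpha>) * (z - e)\<^sup>2"
      using m by simp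
    then show "expectile_loss \<alpha> M X e \<le> expectile_loss \<alpha> M X z"
      using growth[of z] by linarith
  qed
  fix y
  assume "\<forall>z. expectile_loss \<alpha> M X y \<le> expectile_loss \<alpha> M X z"
  then have "min \<alpha> (1 - \<alpha>) * (y - e)\<^sup>2 \<le> 0"
    using growth[of y] by (metis add_le_cancel_left add_0_right order_trans)
  with m show "y = e"
    by (smt (verit) mult_pos_pos zero_less_power2)
qed

lemma integral_expectile_score_expectile:
  assumes "0 < \<alpha>" "\<alpha> < 1"
  shows "(\<integral>x. expectile_score \<alpha> (X x - expectile \<alpha> M X) \<partial>M) = 0"
  using exists_integral_expectile_score_eq_0 expectile_eqI[OF assms] by metis

end

end

locale expectile_mdp =
  fixes P :: "'s::finite \<Rightarrow> 'a::finite \<Rightarrow> (real \<times> 's) measure" and \<gamma> \<alpha> :: real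
  assumes discount: "0 < \<gamma>" "\<gamma> < 1"
    and level: "0 < \<alpha>" "\<alpha> < 1"
    and prob_space_P: "\<And>s a. prob_space (P s a)"
    and sets_P: "\<And>s a. sets (P s a) = sets (borel \<Otimes>\<^sub>M count_space UNIV)"
    and bounded_reward: "\<exists>B. \<forall>s a. AE x in P s a. \<bar>fst x\<bar> \<le> B"
begin

definition target :: "('s \<Rightarrow> real) \<Rightarrow> real \<times> 's \<Rightarrow> real" where
  "target V = (\<lambda>(r, s'). r + \<gamma> * V s')"

definition bellman_score :: "('s \<Rightarrow> real) \<Rightarrow> 's \<Rightarrow> 'a \<Rightarrow> real" where
  "bellman_score V s a = (\<integral>x. expectile_score \<alpha> (target V x - V s) \<partial>P s a)"

lemma target_measurable: "target V \<in> borel_measurable (P s a)"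
proof -
  have "target V \<in> borel_measurable (borel \<Otimes>\<^sub>M count_space UNIV)"
    unfolding target_def by measurable
  then show ?thesis
    using measurable_cong_sets[OF sets_P refl] by blast
qed

lemma target_AE_bounded: "\<exists>C. AE x in P s a. \<bar>target V x\<bar> \<le> C"
proof -
  obtain B where B: "AE x in P s a. \<bar>fst x\<bar> \<le> B"
    using bounded_reward by blast
  have "\<bar>V s'\<bar> \<le> (MAX s. \<bar>V s\<bar>)" for s'
    by (rule Max_ge) auto
  then have V_bound: "\<bar>\<gamma> * V s'\<bar> \<le> \<gamma> * (MAX s. \<bar>V s\<bar>)" for s'
    using discount by (simp add: abs_mult mult_left_mono)
  from B have "AE x in P s a. \<bar>target V x\<bar> \<le> B + \<gamma> * (MAX s. \<bar>V s\<bar>)"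
  proof eventually_elim
    case (elim x)
    then show ?case
      using V_bound[of "snd x"] abs_triangle_ineq[of "fst x" "\<gamma> * V (snd x)"]
      by (simp add: target_def case_prod_beta)
  qed
  then show ?thesis ..
qed

lemma integrable_expectile_score_target:
  "integrable (P s a) (\<lambda>x. expectile_score \<alpha> (target V x - y))"
  using target_AE_bounded level
  by (metis prob_space.integrable_expectile_score[OF prob_space_P target_measurable] less_imp_le)

lemma integral_expectile_score_target_expectile:
  "(\<integral>x. expectile_score \<alpha> (target V x - expectile \<alpha> (P s a) (target V)) \<partial>P s a) = 0"
  using target_AE_bounded level
  by (metis prob_space.integral_expectile_score_expectile[OF prob_space_P target_measurable] less_imp_le)

lemma Tstar_eq:
  assumes "0 \<le> \<zeta>"
  shows "Tstar \<zeta> \<alpha> \<gamma> P V s = V s + 2 * \<zeta> * (MAX a. bellman_score V s a)"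
proof -
  have "(MAX a. 2 * \<zeta> * bellman_score V s a) = 2 * \<zeta> * (MAX a. bellman_score V s a)"
    using assms by (subst mono_Max_commute) (auto simp: mono_def mult_left_mono image_image)
  then show ?thesis
    by (simp add: Tstar_def bellman_score_def expectile_score_def target_def split_beta')
qed

lemma Tstar_fixed_iff:
  assumes "0 < \<zeta>"
  shows "Tstar \<zeta> \<alpha> \<gamma> P V = V \<longleftrightarrow> (\<forall>s. (MAX a. bellman_score V s a) = 0)"
  using assms by (simp add: fun_eq_iff Tstar_eq)

lemma bellman_score_add_ge:
  assumes "\<And>s'. V s' - W s' \<le> V s - W s" and "0 \<le> V s - W s"
  shows "bellman_score V s a + min \<alpha> (1 - \<alpha>) * ((1 - \<gamma>) * (V s - W s)) \<le> bellman_score W s a"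
  unfolding bellman_score_def
proof (intro prob_space.integral_add_const_le[OF prob_space_P] integrable_expectile_score_target)
  fix x
  let ?t = "target V x - V s" and ?u = "target W x - W s" and ?c = "(1 - \<gamma>) * (V s - W s)"
  have "\<gamma> * (V (snd x) - W (snd x)) \<le> \<gamma> * (V s - W s)"
    using assms(1) discount by (simp add: mult_left_mono)
  then have "?t + ?c \<le> ?u"
    by (simp add: target_def case_prod_beta algebra_simps)
  moreover have "0 \<le> ?c"
    using assms(2) discount by simp
  ultimately show "expectile_score \<alpha> ?t + min \<alpha> (1 - \<alpha>) * ?c \<le> expectile_score \<alpha> ?u"
    using level expectile_score_add_ge[of \<alpha> ?c ?t] expectile_score_mono[of \<alpha> "?t + ?c" ?u]
    by simp
qed

lemma bellman_score_comparison:
  assumes sub: "\<And>s. 0 \<le> (MAX a. bellman_score V s a)"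
    and super: "\<And>s. (MAX a. bellman_score W s a) \<le> 0"
  shows "V \<le> W"
proof -
  define d where "d = (MAX s. V s - W s)"
  have le_d: "V s' - W s' \<le> d" for s'
    unfolding d_def by (rule Max_ge) auto
  have "d \<in> range (\<lambda>s. V s - W s)"
    unfolding d_def by (rule Max_in) auto
  then obtain s where s: "V s - W s = d"
    by blast
  have "(MAX a. bellman_score V s a) \<in> range (bellman_score V s)"
    by (rule Max_in) auto
  then obtain a where a: "bellman_score V s a = (MAX a. bellman_score V s a)"
    by (metis rangeE)
  have "bellman_score W s a \<le> (MAX a. bellman_score W s a)"
    by (rule Max_ge) auto
  then have W_le: "bellman_score W s a \<le> 0"
    using super[of s] by linarith
  have "d \<le> 0"
  proof (rule ccontr)
    assume "\<not> d \<le> 0"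
    then have "0 < min \<alpha> (1 - \<alpha>) * ((1 - \<gamma>) * d)"
      using level discount by simp
    moreover have "bellman_score V s a + min \<alpha> (1 - \<alpha>) * ((1 - \<gamma>) * d) \<le> bellman_score W s a"
      using bellman_score_add_ge[of V W s a] le_d s \<open>\<not> d \<le> 0\<close> by simp
    ultimately show False
      using sub[of s] a W_le by linarith
  qed
  show "V \<le> W"
  proof (rule le_funI)
    show "V s' \<le> W s'" for s'
      using le_d[of s'] \<open>d \<le> 0\<close> by linarith
  qed
qed

lemma Max_bellman_score_expectile:
  assumes "\<And>s a. Q s a = expectile \<alpha> (P s a) (target (\<lambda>s. MAX a. Q s a))"
  shows "(MAX a. bellman_score (\<lambda>s. MAX a. Q s a) s a) = 0"
proof (rule Max_eqI)
  let ?V = "\<lambda>s. MAX a. Q s a"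
  have root: "(\<integral>x. expectile_score \<alpha> (target ?V x - Q s a) \<partial>P s a) = 0" for a
    using integral_expectile_score_target_expectile[where V = ?V and s = s and a = a] by (simp only: assms[symmetric])
  show "b \<le> 0" if b_range: "b \<in> range (bellman_score ?V s)" for b
  proof -
    obtain a where b: "b = bellman_score ?V s a"
      using b_range by blast
    have "Q s a \<le> ?V s"
      by (rule Max_ge) auto
    then have "b \<le> (\<integral>x. expectile_score \<alpha> (target ?V x - Q s a) \<partial>P s a)"
      unfolding b bellman_score_def using level
      by (intro integral_mono integrable_expectile_score_target expectile_score_mono) auto
    then show ?thesis
      using root by simp
  qed
  have "?V s \<in> range (Q s)"
    by (rule Max_in) auto
  then obtain a where "?V s = Q s a"
    by blast
  then have "bellman_score ?V s a = 0"
    using root[of a] by (simp add: bellman_score_def)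
  then show "0 \<in> range (bellman_score ?V s)"
    by (metis rangeI)
qed simp

end

theorem lemma10:
  fixes P :: "'s::finite \<Rightarrow> 'a::finite \<Rightarrow> (real \<times> 's) measure"
    and Q :: "'s \<Rightarrow> 'a \<Rightarrow> real"
    and \<gamma> \<alpha> \<zeta> :: real
  assumes "0 < \<gamma>" "\<gamma> < 1" "0 < \<alpha>" "\<alpha> < 1" "0 < \<zeta>"
    and "\<And>s a. prob_space (P s a)"
    and "\<And>s a. sets (P s a) = sets (borel \<Otimes>\<^sub>M count_space UNIV)"
    and "\<exists>B. \<forall>s a. AE x in P s a. \<bar>fst x\<bar> \<le> B"
    and "\<And>s a. Q s a = expectile \<alpha> (P s a) (\<lambda>(r, s'). r + \<gamma> * (MAX a'. Q s' a'))"
  shows "Tstar \<zeta> \<alpha> \<gamma> P (\<lambda>s. MAX a. Q s a) = (\<lambda>s. MAX a. Q s a)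
    \<and> (\<forall>V. Tstar \<zeta> \<alpha> \<gamma> P V = V \<longrightarrow> V = (\<lambda>s. MAX a. Q s a))"
proof -
  interpret expectile_mdp P \<gamma> \<alpha>
    using assms(1-4,6-8) by (simp add: expectile_mdp_def)
  define V_opt where "V_opt = (\<lambda>s. MAX a. Q s a)"
  have target_opt: "target (\<lambda>s. MAX a. Q s a) = (\<lambda>(r, s'). r + \<gamma> * (MAX a'. Q s' a'))"
    unfolding target_def ..
  have V_opt_root: "(MAX a. bellman_score V_opt s a) = 0" for s
    unfolding V_opt_def by (rule Max_bellman_score_expectile) (unfold target_opt, rule assms(9))
  then have fixed: "Tstar \<zeta> \<alpha> \<gamma> P V_opt = V_opt"
    using Tstar_fixed_iff[OF assms(5)] by blast
  have "V = V_opt" if "Tstar \<zeta> \<alpha> \<gamma> P V = V" for V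
  proof -
    have "\<forall>s. (MAX a. bellman_score V s a) = 0"
      using that Tstar_fixed_iff[OF assms(5)] by blast
    with V_opt_root have "V \<le> V_opt" "V_opt \<le> V"
      by (simp_all add: bellman_score_comparison)
    then show ?thesis
      by (rule antisym)
  qed
  with fixed show ?thesis
    unfolding V_opt_def by blast
qed

end
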